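(* Let $K$ be an alphabet space and $\sigma:K\to K^+$ a primitive generalized substitution. Then for every $a\in K$, $\lim_{n\to\infty}|\sigma^n(a)|=\infty$.
   Context: An alphabet space is a compact zero-dimensional metric space $K$ with at least two points; $K^+$ is the set of nonempty finite words over $K$. A generalized substitution is a map $\sigma:K\to K^+$ with $a\mapsto|\sigma(a)|$ continuous and, for each $j$, $a\mapsto$ ($j$-th letter of $\sigma(a)$) continuous on $\{a:|\sigma(a)|\ge j\}$; it is extended to words by concatenation and iterated. $\sigma$ is primitive if for every nonempty open $V\subset K$ there is $j$ such that for all $a\in K$ and all $k\ge j$ some letter of $\sigma^k(a)$ lies in $V$. *)

theory Defs
  imports "HOL-Analysis.Analysis"
begin

definition zero_dimensional :: "'a::metric_space set \<Rightarrow> bool" where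
  "zero_dimensional K \<longleftrightarrow>
     (\<forall>U x. openin (top_of_set K) U \<and> x \<in> U \<longrightarrow>
        (\<exists>C. openin (top_of_set K) C \<and> closedin (top_of_set K) C \<and> x \<in> C \<and> C \<subseteq> U))"

definition alphabet_space :: "'a::metric_space set \<Rightarrow> bool" where
  "alphabet_space K \<longleftrightarrow> compact K \<and> zero_dimensional K \<and> (\<exists>x\<in>K. \<exists>y\<in>K. x \<noteq> y)"

text \<open>Generalized substitution K -> K^+ (nonempty finite words, as lists);
  the j-th letter is index j (0-based) of the list.\<close>
definition gen_substitution :: "'a::metric_space set \<Rightarrow> ('a \<Rightarrow> 'a list) \<Rightarrow> bool" where
  "gen_substitution K \<sigma> \<longleftrightarrow>
     (\<forall>a\<in>K. \<sigma> a \<noteq> [] \<and> set (\<sigma> a) \<subseteq> K) \<and>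
     continuous_on K (\<lambda>a. length (\<sigma> a)) \<and>
     (\<forall>j. continuous_on {a\<in>K. j < length (\<sigma> a)} (\<lambda>a. \<sigma> a ! j))"

definition subst_word :: "('a \<Rightarrow> 'a list) \<Rightarrow> 'a list \<Rightarrow> 'a list" where
  "subst_word \<sigma> w = concat (map \<sigma> w)"

definition subst_iter :: "('a \<Rightarrow> 'a list) \<Rightarrow> nat \<Rightarrow> 'a \<Rightarrow> 'a list" where
  "subst_iter \<sigma> n a = (subst_word \<sigma> ^^ n) [a]"

definition primitive :: "'a::metric_space set \<Rightarrow> ('a \<Rightarrow> 'a list) \<Rightarrow> bool" where
  "primitive K \<sigma> \<longleftrightarrow>
     (\<forall>V. openin (top_of_set K) V \<and> V \<noteq> {} \<longrightarrow>
        (\<exists>j. \<forall>a\<in>K. \<forall>k\<ge>j. \<exists>x\<in>set (subst_iter \<sigma> k a). x \<in> V))"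

end

theory Submission
  imports Defs
begin

text \<open>Primitivity applied to two disjoint nonempty open sets yields a power \<open>\<sigma>\<^sup>j\<close> all of whose
  images have at least two letters. Since \<open>\<sigma>\<^sup>j\<^sup>+\<^sup>n(a)\<close> is the concatenation of the words
  \<open>\<sigma>\<^sup>j(b)\<close> over the letters \<open>b\<close> of \<open>\<sigma>\<^sup>n(a)\<close>, the length at least doubles every \<open>j\<close> steps.\<close>

lemma subst_word_funpow:
  "(subst_word \<sigma> ^^ k) w = concat (map (subst_iter \<sigma> k) w)"
proof (induction k arbitrary: w)
  case 0
  then show ?case by (simp add: subst_iter_def)
next
  case (Suc k)
  have "(subst_word \<sigma> ^^ Suc k) w = subst_word \<sigma> (concat (map (subst_iter \<sigma> k) w))"
    using Suc by simp
  also have "\<dots> = concat (map (\<lambda>b. subst_word \<sigma> (subst_iter \<sigma> k b)) w)"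
    by (induction w) (auto simp: subst_word_def)
  also have "\<dots> = concat (map (subst_iter \<sigma> (Suc k)) w)"
    by (simp add: subst_iter_def[abs_def])
  finally show ?case .
qed

lemma subst_iter_add:
  "subst_iter \<sigma> (j + n) a = concat (map (subst_iter \<sigma> j) (subst_iter \<sigma> n a))"
  by (simp add: subst_iter_def funpow_add subst_word_funpow[symmetric])

lemma subst_iter_Suc:
  "subst_iter \<sigma> (Suc n) a = concat (map \<sigma> (subst_iter \<sigma> n a))"
  by (simp add: subst_iter_def subst_word_def)

lemma set_subst_iter_subset:
  assumes "\<forall>b\<in>K. set (\<sigma> b) \<subseteq> K" and "a \<in> K"
  shows "set (subst_iter \<sigma> n a) \<subseteq> K"
proof (induction n)
  case 0
  then show ?case using assms(2) by (simp add: subst_iter_def)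
next
  case (Suc n)
  then show ?case using assms(1) by (auto simp: subst_iter_Suc)
qed

lemma subst_iter_nonempty:
  assumes "\<forall>b\<in>K. \<sigma> b \<noteq> [] \<and> set (\<sigma> b) \<subseteq> K" and "a \<in> K"
  shows "subst_iter \<sigma> n a \<noteq> []"
proof (induction n)
  case 0
  then show ?case by (simp add: subst_iter_def)
next
  case (Suc n)
  then obtain b bs where bs: "subst_iter \<sigma> n a = b # bs"
    by (cases "subst_iter \<sigma> n a") auto
  have "b \<in> K"
    using set_subst_iter_subset[of K \<sigma> a n] assms bs by auto
  then show ?case
    using assms(1) by (simp add: subst_iter_Suc bs)
qed

lemma length_subst_iter_add_ge:
  assumes "\<forall>b\<in>set (subst_iter \<sigma> n a). c \<le> length (subst_iter \<sigma> j b)"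
  shows "c * length (subst_iter \<sigma> n a) \<le> length (subst_iter \<sigma> (j + n) a)"
proof -
  have "c * length (subst_iter \<sigma> n a) = sum_list (map (\<lambda>_. c) (subst_iter \<sigma> n a))"
    by (simp add: sum_list_triv)
  also have "\<dots> \<le> sum_list (map (\<lambda>b. length (subst_iter \<sigma> j b)) (subst_iter \<sigma> n a))"
    using assms by (intro sum_list_mono) auto
  also have "\<dots> = length (subst_iter \<sigma> (j + n) a)"
    by (simp add: subst_iter_add length_concat o_def)
  finally show ?thesis .
qed

lemma primitive_length_subst_iter_ge_2:
  fixes K :: "'a::metric_space set"
  assumes "primitive K \<sigma>" and "x \<in> K" "y \<in> K" "x \<noteq> y"
  obtains j where "j > 0" and "\<And>b. b \<in> K \<Longrightarrow> 2 \<le> length (subst_iter \<sigma> j b)"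
proof -
  obtain U V where UV: "open U" "open V" "x \<in> U" "y \<in> V" "U \<inter> V = {}"
    using separation_t2[THEN iffD1, OF assms(4)] by blast
  have "openin (top_of_set K) (K \<inter> U)" "openin (top_of_set K) (K \<inter> V)"
    using UV by (auto simp: openin_open_Int)
  moreover have "K \<inter> U \<noteq> {}" "K \<inter> V \<noteq> {}"
    using UV assms(2,3) by auto
  ultimately obtain jU jV
    where jU: "\<forall>b\<in>K. \<forall>k\<ge>jU. \<exists>z\<in>set (subst_iter \<sigma> k b). z \<in> K \<inter> U"
      and jV: "\<forall>b\<in>K. \<forall>k\<ge>jV. \<exists>z\<in>set (subst_iter \<sigma> k b). z \<in> K \<inter> V"
    using assms(1) unfolding primitive_def by meson
  define j where "j = max 1 (max jU jV)"
  have "2 \<le> length (subst_iter \<sigma> j b)" if "b \<in> K" for b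
  proof -
    have "jU \<le> j" "jV \<le> j"
      by (simp_all add: j_def)
    then obtain u w where "u \<in> set (subst_iter \<sigma> j b)" "u \<in> U"
      and "w \<in> set (subst_iter \<sigma> j b)" "w \<in> V"
      using jU[rule_format, OF \<open>b \<in> K\<close>] jV[rule_format, OF \<open>b \<in> K\<close>] by blast
    then have "card {u, w} \<le> card (set (subst_iter \<sigma> j b))" and "u \<noteq> w"
      using UV(5) by (auto intro: card_mono)
    then show ?thesis
      using card_length[of "subst_iter \<sigma> j b"] by simp
  qed
  moreover have "j > 0"
    by (simp add: j_def)
  ultimately show thesis
    using that by blast
qed

lemma filterlim_at_top_if_doubling:
  fixes f :: "nat \<Rightarrow> nat"
  assumes "j > 0" and "\<And>n. 1 \<le> f n" and "\<And>n. 2 * f n \<le> f (j + n)"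
  shows "filterlim f at_top sequentially"
proof -
  have grow: "2 ^ m \<le> f (m * j + r)" for m r
  proof (induction m)
    case 0
    then show ?case using assms(2) by simp
  next
    case (Suc m)
    then have "2 ^ Suc m \<le> f (j + (m * j + r))"
      using assms(3)[of "m * j + r"] by simp
    then show ?case by (simp add: add.assoc)
  qed
  show ?thesis
    unfolding filterlim_at_top eventually_sequentially
  proof (intro allI exI impI)
    fix Z n :: nat
    assume "Z * j \<le> n"
    then have "Z \<le> n div j"
      using assms(1) by (simp add: less_eq_div_iff_mult_less_eq)
    then have "Z < 2 ^ (n div j)"
      using less_exp[of Z] power_increasing[of Z "n div j" "2::nat"] by linarith
    also have "\<dots> \<le> f n"
      using grow[of "n div j" "n mod j"] by simp
    finally show "Z \<le> f n" by simp
  qed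
qed

theorem mainTheorem17:
  fixes K :: "'a::metric_space set" and \<sigma> :: "'a \<Rightarrow> 'a list"
  assumes "alphabet_space K" and "gen_substitution K \<sigma>" and "primitive K \<sigma>"
  shows "\<forall>a\<in>K. filterlim (\<lambda>n. length (subst_iter \<sigma> n a)) at_top sequentially"
proof
  fix a assume "a \<in> K"
  have \<sigma>K: "\<forall>b\<in>K. \<sigma> b \<noteq> [] \<and> set (\<sigma> b) \<subseteq> K"
    using assms(2) by (simp add: gen_substitution_def)
  obtain x y where xy: "x \<in> K" "y \<in> K" "x \<noteq> y"
    using assms(1) by (auto simp: alphabet_space_def)
  obtain j where "j > 0" and two: "\<And>b. b \<in> K \<Longrightarrow> 2 \<le> length (subst_iter \<sigma> j b)"
    using primitive_length_subst_iter_ge_2[OF assms(3) xy] by blast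
  show "filterlim (\<lambda>n. length (subst_iter \<sigma> n a)) at_top sequentially"
  proof (rule filterlim_at_top_if_doubling[OF \<open>j > 0\<close>])
    show "1 \<le> length (subst_iter \<sigma> n a)" for n
      using subst_iter_nonempty[OF \<sigma>K \<open>a \<in> K\<close>] by (simp add: Suc_le_eq)
    show "2 * length (subst_iter \<sigma> n a) \<le> length (subst_iter \<sigma> (j + n) a)" for n
      using set_subst_iter_subset[of K \<sigma> a n] \<sigma>K \<open>a \<in> K\<close> two
      by (intro length_subst_iter_add_ge) auto
  qed
qed

end
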